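(* Let $g\geqslant2$ be even and $u\in\mathbb{C}[\alpha,\gamma]$. If $\gamma^2u\in J_g^+$, then $u\in J_{g-4}^+$.
   Context: $\zeta_k^+\in\mathbb{C}[\alpha,\gamma]$: $\zeta^+_i=0$ for $i<0$, $\zeta^+_0=1$, $\zeta^+_{k+1}=\alpha\zeta^+_k+16k^2\zeta^+_{k-1}+2k(k-1)\gamma\zeta^+_{k-2}$ for $k$ even and $\zeta^+_{k+1}=\alpha\zeta^+_k+2k(k-1)\gamma\zeta^+_{k-2}$ for $k$ odd ($k\geqslant0$); $J^+_k=(\zeta^+_k,\zeta^+_{k+1},\zeta^+_{k+2})$ for all integers $k$ (so $J_k^+=(1)$ for $k\leqslant -2$). *)

theory Defs
  imports Complex_Main "HOL-Computational_Algebra.Polynomial"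
begin

text \<open>The ring C[alpha, gamma] is modelled as (C[alpha])[gamma], i.e. complex poly poly:
  the outer variable is gamma, the inner variable is alpha.\<close>

definition alpha :: "complex poly poly" where
  "alpha = [: [:0, 1:] :]"

definition gamma :: "complex poly poly" where
  "gamma = [:0, 1:]"

fun zeta_nat :: "nat \<Rightarrow> complex poly poly" where
  "zeta_nat 0 = 1"
| "zeta_nat (Suc k) =
     alpha * zeta_nat k
     + (if even k \<and> k \<ge> 1 then of_nat (16 * k^2) * zeta_nat (k - 1) else 0)
     + (if k \<ge> 2 then of_nat (2 * k * (k - 1)) * gamma * zeta_nat (k - 2) else 0)"

definition zeta :: "int \<Rightarrow> complex poly poly" where
  "zeta k = (if k < 0 then 0 else zeta_nat (nat k))"

definition J :: "int \<Rightarrow> complex poly poly set" where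
  "J k = {a * zeta k + b * zeta (k + 1) + c * zeta (k + 2) | a b c. True}"

end

theory Submission
  imports Defs
begin

text \<open>Write g = r + 5 with r odd. Setting gamma = 0 turns zeta k into a polynomial zeta0 k in alpha
  obeying a two-term recurrence, and these are all nonzero. Comparing constant terms in gamma of
  gamma w = a zeta(r+5) + b zeta(r+6) + c zeta(r+7) determines the constant terms of a, b, c well
  enough to divide by gamma, which puts w into the ideal Jeta r generated by
  eta r = 16(r+5)(r+3) zeta(r+2) - alpha zeta(r+3) and zeta(r+4), ..., zeta(r+7). The same argument
  once more divides gamma u \<in> Jeta r by gamma inside J (r+1), provided alpha zeta r \<in> J (r+1).

  That last membership, alpha zeta(2M-1) \<in> J (2M), is the heart of the matter. Normalise
  zhat j = zeta j / (j! 4^j) and let b_l be the Fourier coefficients of \<Sum>j<2M. zhat j f_j(t), where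
  f_0 = 1, f_1 = sin t / 2 and f_(j+2) = sin^2(t/2) f_j. The differential equation behind the
  recurrence for zeta makes b_l satisfy a three-term recurrence in l modulo J (2M), and b_l = 0 for
  |l| > M. Running it inwards from l = M and from l = -M shows that b_(\<plusminus>M), a nonzero multiple of
  zhat(2M-1), is annihilated modulo J (2M) by products of linear factors in lam = 32 alpha + 2 gamma,
  with disjoint sets of roots for the two ends. Hence lam zhat(2M-1) \<in> J (2M); together with
  gamma zhat(2M-1) \<in> J (2M) this gives the claim.\<close>

definition cconst :: "complex \<Rightarrow> complex poly poly" where
  "cconst c = [:[:c:]:]"

lemma cconst_add: "cconst (a + b) = cconst a + cconst b"
  by (simp add: cconst_def)

lemma cconst_mult: "cconst (a * b) = cconst a * cconst b"
  by (simp add: cconst_def)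

lemma cconst_diff: "cconst (a - b) = cconst a - cconst b"
  by (simp add: cconst_def)

lemma cconst_0 [simp]: "cconst 0 = 0"
  by (simp add: cconst_def)

lemma cconst_1 [simp]: "cconst 1 = 1"
  by (simp add: cconst_def one_pCons)

lemma cconst_of_nat: "cconst (of_nat n) = of_nat n"
  by (induction n) (simp_all add: cconst_add)

lemma cconst_numeral: "cconst (numeral n) = numeral n"
  using cconst_of_nat[of "numeral n"] by simp

lemma zeta_nat_Suc:
  "zeta_nat (Suc k) = alpha * zeta_nat k + (if even k then of_nat (16 * k^2) else 0) * zeta_nat (k - 1)
     + of_nat (2 * k * (k - 1)) * gamma * zeta_nat (k - 2)"
proof (cases "k < 2")
  case True
  then have "k = 0 \<or> k = 1" by auto
  then show ?thesis by auto
qed simp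

lemma zeta_of_nat: "zeta (int n) = zeta_nat n"
  by (simp add: zeta_def)

lemma J_iff: "x \<in> J k \<longleftrightarrow> (\<exists>a b c. x = a * zeta k + b * zeta (k + 1) + c * zeta (k + 2))"
  unfolding J_def by blast

lemma J_of_nat_iff:
  "x \<in> J (int n) \<longleftrightarrow> (\<exists>a b c. x = a * zeta_nat n + b * zeta_nat (n + 1) + c * zeta_nat (n + 2))"
  unfolding J_iff by (simp add: zeta_def nat_add_distrib)

lemma J_add: "x \<in> J k \<Longrightarrow> y \<in> J k \<Longrightarrow> x + y \<in> J k"
proof -
  assume "x \<in> J k" "y \<in> J k"
  then obtain a b c a' b' c' where "x = a * zeta k + b * zeta (k + 1) + c * zeta (k + 2)"
    "y = a' * zeta k + b' * zeta (k + 1) + c' * zeta (k + 2)" unfolding J_iff by blast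
  then have "x + y = (a + a') * zeta k + (b + b') * zeta (k + 1) + (c + c') * zeta (k + 2)"
    by (simp add: algebra_simps)
  then show ?thesis unfolding J_iff by blast
qed

lemma J_mult: "x \<in> J k \<Longrightarrow> r * x \<in> J k"
proof -
  assume "x \<in> J k"
  then obtain a b c where "x = a * zeta k + b * zeta (k + 1) + c * zeta (k + 2)"
    unfolding J_iff by blast
  then have "r * x = (r * a) * zeta k + (r * b) * zeta (k + 1) + (r * c) * zeta (k + 2)"
    by (simp add: algebra_simps)
  then show ?thesis unfolding J_iff by blast
qed

lemma J_mult_right: "x \<in> J k \<Longrightarrow> x * r \<in> J k"
  using J_mult[of x k r] by (simp add: mult.commute)

lemma J_zero: "0 \<in> J k"
  using J_mult[of _ k 0] by (force simp: J_iff)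

lemma J_diff: "x \<in> J k \<Longrightarrow> y \<in> J k \<Longrightarrow> x - y \<in> J k"
  using J_add[of x k "(-1) * y"] J_mult[of y k "-1"] by simp

lemma J_cancel_cconst: "c \<noteq> 0 \<Longrightarrow> cconst c * x \<in> J k \<Longrightarrow> x \<in> J k"
  using J_mult[of "cconst c * x" k "cconst (1 / c)"] by (simp add: mult.assoc[symmetric] flip: cconst_mult)

lemma J_three_term_chain:
  fixes B :: "nat \<Rightarrow> complex poly poly" and s :: "nat \<Rightarrow> complex" and X G :: "complex poly poly"
  assumes H0: "(cconst (s 0) - X) * B 0 + G * B 1 \<in> J k"
    and Hs: "\<And>j. (cconst (s (Suc j)) - X) * B (Suc j) + G * (B (Suc (Suc j)) + B j) \<in> J k"
    and Hk: "G * B 0 \<in> J k"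
  shows "G^j * B j - (\<Prod>r<j. (X - cconst (s r))) * B 0 \<in> J k"
proof -
  define Q where "Q j = G^j * B j - (\<Prod>r<j. (X - cconst (s r))) * B 0" for j
  have "Q j \<in> J k \<and> Q (Suc j) \<in> J k" for j
  proof (induction j)
    case 0
    have "Q 0 = 0" by (simp add: Q_def)
    moreover have "Q (Suc 0) = (cconst (s 0) - X) * B 0 + G * B 1" by (simp add: Q_def algebra_simps)
    ultimately show ?case using H0 J_zero by simp
  next
    case (Suc j)
    have "Q (Suc (Suc j)) = G^(Suc j) * ((cconst (s (Suc j)) - X) * B (Suc j) + G * (B (Suc (Suc j)) + B j))
      - (cconst (s (Suc j)) - X) * Q (Suc j) - G^2 * Q j - G * (\<Prod>r<j. (X - cconst (s r))) * (G * B 0)"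
      by (simp add: Q_def algebra_simps power2_eq_square)
    also have "\<dots> \<in> J k"
    proof -
      have a1: "G^(Suc j) * ((cconst (s (Suc j)) - X) * B (Suc j) + G * (B (Suc (Suc j)) + B j)) \<in> J k"
        by (rule J_mult[OF Hs])
      have a2: "(cconst (s (Suc j)) - X) * Q (Suc j) \<in> J k" using Suc.IH by (intro J_mult) simp
      have a3: "G^2 * Q j \<in> J k" using Suc.IH by (intro J_mult) simp
      have a4: "G * (\<Prod>r<j. (X - cconst (s r))) * (G * B 0) \<in> J k" by (rule J_mult[OF Hk])
      show ?thesis by (rule J_diff[OF J_diff[OF J_diff[OF a1 a2] a3] a4])
    qed
    finally show ?case using Suc.IH by simp
  qed
  then show ?thesis by (simp add: Q_def)
qed

lemma J_cancel_root:
  fixes X u :: "complex poly poly"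
  assumes "finite B" "\<forall>t\<in>B. c \<noteq> g t"
    and "(X - cconst c) * u \<in> J k" "(\<Prod>t\<in>B. (X - cconst (g t))) * u \<in> J k"
  shows "u \<in> J k"
  using assms
proof (induction B arbitrary: u rule: finite_induct)
  case empty
  then show ?case by simp
next
  case (insert t B)
  define u' where "u' = (X - cconst (g t)) * u"
  have "(X - cconst c) * u' \<in> J k"
    using J_mult[OF insert.prems(2), of "X - cconst (g t)"] by (simp add: u'_def algebra_simps)
  moreover have "(\<Prod>t\<in>B. (X - cconst (g t))) * u' \<in> J k"
    using insert.prems(3) insert.hyps by (simp add: u'_def algebra_simps)
  ultimately have u': "u' \<in> J k" using insert.IH insert.prems(1) by auto
  have "cconst (g t - c) * u = (X - cconst c) * u - u'" by (simp add: u'_def cconst_diff algebra_simps)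
  also have "\<dots> \<in> J k" using u' insert.prems(2) by (intro J_diff)
  finally show ?case by (rule J_cancel_cconst[rotated]) (use insert.prems(1) in auto)
qed

lemma J_cancel_roots:
  fixes X u :: "complex poly poly"
  assumes "finite A" "finite B" "\<forall>r\<in>A. \<forall>t\<in>B. f r \<noteq> g t"
    "(\<Prod>r\<in>A. (X - cconst (f r))) * u \<in> J k" "(\<Prod>t\<in>B. (X - cconst (g t))) * u \<in> J k"
  shows "u \<in> J k"
  using assms
proof (induction A arbitrary: u rule: finite_induct)
  case empty
  then show ?case by simp
next
  case (insert r A)
  define u' where "u' = (X - cconst (f r)) * u"
  have "(\<Prod>r\<in>A. (X - cconst (f r))) * u' \<in> J k"
    using insert.prems(3) insert.hyps by (simp add: u'_def algebra_simps)
  moreover have "(\<Prod>t\<in>B. (X - cconst (g t))) * u' \<in> J k"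
    using J_mult[OF insert.prems(4), of "X - cconst (f r)"] by (simp add: u'_def algebra_simps)
  ultimately have "u' \<in> J k" using insert.IH insert.prems(1,2) by auto
  then show ?case
    using J_cancel_root[of B "f r" g X u k] insert.prems by (auto simp: u'_def)
qed

lemma J_eq_UNIV:
  assumes "-2 \<le> k" "k \<le> 0"
  shows "J k = UNIV"
proof -
  have "u \<in> J k" for u
    unfolding J_iff using assms
    by (intro exI[of _ "if k = 0 then u else 0"] exI[of _ "if k = -1 then u else 0"]
        exI[of _ "if k = -2 then u else 0"]) (auto simp: zeta_def)
  then show ?thesis by blast
qed

lemma generators_mem_J: "zeta k \<in> J k" "zeta (k + 1) \<in> J k" "zeta (k + 2) \<in> J k"
  unfolding J_iff
  by (rule exI[of _ 1], rule exI[of _ 0], rule exI[of _ 0], simp)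
    (rule exI[of _ 0], rule exI[of _ 1], rule exI[of _ 0], simp,
     rule exI[of _ 0], rule exI[of _ 0], rule exI[of _ 1], simp)

lemma zeta_nat_mem_J: "n \<le> j \<Longrightarrow> zeta_nat j \<in> J (int n)"
proof (induction j rule: less_induct)
  case (less j)
  show ?case
  proof (cases "j \<le> n + 2")
    case True
    then have "j = n \<or> j = n + 1 \<or> j = n + 2" using less.prems by auto
    then show ?thesis using generators_mem_J[of "int n"] by (auto simp flip: zeta_of_nat simp: add.commute)
  next
    case False
    then obtain k where k: "j = Suc k" "n + 2 \<le> k" by (cases j) auto
    have "zeta_nat k \<in> J (int n)" "zeta_nat (k - 1) \<in> J (int n)" "zeta_nat (k - 2) \<in> J (int n)"
      using less.IH k by auto
    then show ?thesis unfolding k(1) zeta_nat_Suc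
      by (intro J_add J_mult) auto
  qed
qed

text \<open>The normalisation by \<open>1 / (j! 4^j)\<close> turns the quadratic coefficients of the recurrence
  for \<open>\<zeta>\<close> into the linear ones of \<open>zhat_rec\<close>.\<close>

definition zhat_coeff :: "nat \<Rightarrow> complex" where
  "zhat_coeff n = 1 / (of_nat (fact n) * 4 ^ n)"

definition zhat :: "int \<Rightarrow> complex poly poly" where
  "zhat j = (if j < 0 then 0 else cconst (zhat_coeff (nat j)) * zeta_nat (nat j))"

lemma zhat_of_nat: "zhat (int n) = cconst (zhat_coeff n) * zeta_nat n"
  by (simp add: zhat_def)

lemma zhat_coeff_nonzero: "zhat_coeff n \<noteq> 0" by (simp add: zhat_coeff_def)

lemma zhat_coeff_Suc: "zhat_coeff (Suc n) = zhat_coeff n / (4 * of_nat (Suc n))"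
  by (simp add: zhat_coeff_def field_simps)

lemma zhat_rec: "32 * of_nat (n+1) * zhat (int n + 1) = 8 * alpha * zhat (int n)
   + (if even n then 32 * of_nat n * zhat (int n - 1) else 0) + gamma * zhat (int n - 2)"
proof -
  consider "n = 0" | "n = 1" | p where "n = Suc (Suc p)" by (cases n; cases "n - 1") auto
  then show ?thesis
  proof cases
    case 1
    have "32 * cconst (1/4) = (8 :: complex poly poly)"
      by (simp add: cconst_numeral[symmetric] cconst_mult[symmetric])
    then show ?thesis using 1 by (simp add: zhat_def zhat_coeff_def algebra_simps)
  next
    case 2
    have "64 * cconst (1/32) = (8 * cconst (1/4) :: complex poly poly)"
      by (simp add: cconst_numeral[symmetric] cconst_mult[symmetric])
    then show ?thesis using 2
      by (simp add: zhat_def zhat_coeff_def algebra_simps numeral_2_eq_2)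
  next
    case 3
    have e1: "int n + 1 = int (Suc n)" "int n - 1 = int (Suc p)" "int n - 2 = int p" using 3 by auto
    have nz: "(of_nat (Suc p) :: complex) \<noteq> 0" "(of_nat (Suc (Suc p)) :: complex) \<noteq> 0"
      "(of_nat (Suc (Suc (Suc p))) :: complex) \<noteq> 0" by (simp_all only: of_nat_eq_0_iff)
    have c1: "32 * of_nat (n+1) * zhat_coeff (Suc n) = 8 * zhat_coeff n"
      using 3 nz by (simp add: zhat_coeff_Suc field_simps del: of_nat_Suc)
    have c2: "32 * of_nat (n+1) * zhat_coeff (Suc n) * of_nat (16 * n^2) = 32 * of_nat n * zhat_coeff (Suc p)"
      using 3 nz by (simp add: zhat_coeff_Suc field_simps power2_eq_square del: of_nat_Suc) (simp add: algebra_simps)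
    have c3: "32 * of_nat (n+1) * zhat_coeff (Suc n) * of_nat (2 * n * (n - 1)) = zhat_coeff p"
      using 3 nz by (simp add: zhat_coeff_Suc field_simps del: of_nat_Suc) (simp add: algebra_simps)
    have "32 * of_nat (n+1) * zhat (int n + 1) = cconst (32 * of_nat (n+1) * zhat_coeff (Suc n)) * zeta_nat (Suc n)"
      unfolding e1 zhat_of_nat by (simp only: cconst_mult cconst_of_nat cconst_numeral mult.assoc)
    also have "\<dots> = cconst (32 * of_nat (n+1) * zhat_coeff (Suc n)) * alpha * zeta_nat n
       + (if even n then cconst (32 * of_nat (n+1) * zhat_coeff (Suc n) * of_nat (16 * n^2)) else 0) * zeta_nat (n-1)
       + cconst (32 * of_nat (n+1) * zhat_coeff (Suc n) * of_nat (2 * n * (n - 1))) * gamma * zeta_nat (n-2)"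
      unfolding zeta_nat_Suc
      by (cases "even n") (simp_all only: if_True if_False cconst_mult cconst_of_nat algebra_simps
          mult_zero_left mult_zero_right add_0_right add_0_left)
    also have "\<dots> = 8 * alpha * zhat (int n)
   + (if even n then 32 * of_nat n * zhat (int n - 1) else 0) + gamma * zhat (int n - 2)"
      unfolding c2 c3 unfolding c1 e1 zhat_of_nat using 3
      by (cases "even n") (simp_all only: cconst_mult cconst_of_nat cconst_numeral ac_simps if_True if_False
          mult_zero_left add_0_right diff_Suc_1 diff_Suc_Suc minus_nat.diff_0 One_nat_def numeral_2_eq_2)
    finally show ?thesis .
  qed
qed

lemma zhat_mem_J: "m \<le> j \<Longrightarrow> zhat (int j) \<in> J (int m)"
  unfolding zhat_of_nat by (rule J_mult, rule zeta_nat_mem_J)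

section \<open>Fourier coefficients\<close>

text \<open>\<open>fcoeff j\<close> is the Fourier coefficient sequence of \<open>f_j(t)\<close>, where \<open>f_0 = 1\<close>,
  \<open>f_1 = sin t / 2\<close> and \<open>f_(j+2) = sin\<^sup>2(t/2) f_j\<close>; on coefficient sequences, \<open>sinsq\<close> is
  multiplication by \<open>sin\<^sup>2(t/2) = (2 - e^(it) - e^(-it)) / 4\<close>. In these terms \<open>fcoeff_diff_shift\<close>
  says \<open>(sin t / 2) f_j = f_(j+1) - [j odd] f_(j+3)\<close> and \<open>fcoeff_index_mult\<close> says
  \<open>2 f_j' = j f_(j-1) - [j odd] (j+1) f_(j+1)\<close>.\<close>

fun fcoeff :: "nat \<Rightarrow> int \<Rightarrow> complex" where
  "fcoeff 0 l = (if l = 0 then 1 else 0)"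
| "fcoeff (Suc 0) l = ((if l = 1 then 1 else 0) - (if l = -1 then 1 else 0)) / (4*\<i>)"
| "fcoeff (Suc (Suc j)) l = (2 * fcoeff j l - fcoeff j (l-1) - fcoeff j (l+1)) / 4"

definition sinsq :: "(int \<Rightarrow> complex) \<Rightarrow> int \<Rightarrow> complex" where
  "sinsq f l = (2 * f l - f (l-1) - f (l+1)) / 4"

lemma fcoeff_Suc_Suc: "fcoeff (Suc (Suc j)) l = sinsq (fcoeff j) l" by (simp add: sinsq_def)

lemma sinsq_diff_shift:
  assumes "\<And>x. g x - h x = (f (x-1) - f (x+1)) / (4*\<i>)"
  shows "(sinsq f (l-1) - sinsq f (l+1)) / (4*\<i>) = sinsq g l - sinsq h l"
proof -
  have "sinsq g l - sinsq h l = (2 * (g l - h l) - (g (l-1) - h (l-1)) - (g (l+1) - h (l+1))) / 4"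
    by (simp add: sinsq_def field_simps)
  also have "\<dots> = (2 * ((f (l-1) - f (l+1)) / (4*\<i>)) - ((f (l-1-1) - f (l-1+1)) / (4*\<i>))
     - ((f (l+1-1) - f (l+1+1)) / (4*\<i>))) / 4"
    by (simp only: assms)
  finally have eq: "sinsq g l - sinsq h l = \<dots>" .
  show ?thesis unfolding eq by (simp add: sinsq_def field_simps)
qed

lemma fcoeff_diff_shift:
  "(fcoeff j (l-1) - fcoeff j (l+1)) / (4*\<i>) = fcoeff (Suc j) l - (if odd j then fcoeff (Suc (Suc (Suc j))) l else 0)"
proof (induction j arbitrary: l rule: less_induct)
  case (less j)
  consider "j = 0" | "j = 1" | k where "j = Suc (Suc k)" by (cases j; cases "j - 1") auto
  then show ?case
  proof cases
    case 1
    then show ?thesis by (auto simp: field_simps)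
  next
    case 2
    have "l = -2 \<or> l = -1 \<or> l = 0 \<or> l = 1 \<or> l = 2 \<or> l < -2 \<or> l > 2" by arith
    then show ?thesis using 2 by (elim disjE) (auto simp: field_simps)
  next
    case 3
    have IH: "\<And>x. fcoeff (Suc k) x - (if odd k then fcoeff (Suc (Suc (Suc k))) x else 0)
        = (fcoeff k (x-1) - fcoeff k (x+1)) / (4*\<i>)"
      using less.IH[of k] 3 by auto
    have "(fcoeff j (l-1) - fcoeff j (l+1)) / (4*\<i>) = (sinsq (fcoeff k) (l-1) - sinsq (fcoeff k) (l+1)) / (4*\<i>)"
      using 3 by (simp only: fcoeff_Suc_Suc)
    also have "\<dots> = sinsq (fcoeff (Suc k)) l - sinsq (\<lambda>x. if odd k then fcoeff (Suc (Suc (Suc k))) x else 0) l"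
      by (rule sinsq_diff_shift) (rule IH)
    also have "\<dots> = fcoeff (Suc j) l - (if odd j then fcoeff (Suc (Suc (Suc j))) l else 0)"
      using 3 by (cases "odd k") (simp_all only: fcoeff_Suc_Suc sinsq_def, simp_all)
    finally show ?thesis .
  qed
qed

lemma sinsq_index_mult:
  fixes f g h :: "int \<Rightarrow> complex" and a c :: complex
  assumes h1: "\<And>x. 2*\<i>*of_int x * f x = a * g x - c * (a+1) * h x"
    and h2: "\<And>x. (f (x-1) - f (x+1)) / (4*\<i>) = h x - c * sinsq h x"
    and h3: "\<And>x. a * sinsq g x = a * h x"
  shows "2*\<i>*of_int l * sinsq f l = (a+2) * h l - c * (a+3) * sinsq h l"
proof -
  have "2*\<i>*of_int l * sinsq f l = (2 * (2*\<i>*of_int l * f l) - (2*\<i>*of_int (l-1) * f (l-1))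
      - (2*\<i>*of_int (l+1) * f (l+1))) / 4 - 2*\<i>*(f (l-1) - f (l+1)) / 4"
    by (simp add: sinsq_def field_simps)
  also have "\<dots> = (2 * (a * g l - c * (a+1) * h l) - (a * g (l-1) - c * (a+1) * h (l-1))
      - (a * g (l+1) - c * (a+1) * h (l+1))) / 4 - 2*\<i>*(4*\<i>*((f (l-1) - f (l+1)) / (4*\<i>))) / 4"
    by (simp only: h1) simp
  also have "\<dots> = a * sinsq g l - c * (a+1) * sinsq h l + 2 * (h l - c * sinsq h l)"
    by (simp only: h2) (simp add: sinsq_def field_simps)
  also have "\<dots> = (a+2) * h l - c * (a+3) * sinsq h l"
    by (simp only: h3) (simp add: algebra_simps)
  finally show ?thesis .
qed

lemma fcoeff_index_mult:
  "2*\<i>*of_int l * fcoeff j l = of_nat j * fcoeff (j-1) l - (if odd j then of_nat (Suc j) * fcoeff (Suc j) l else 0)"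
proof (induction j arbitrary: l rule: less_induct)
  case (less j)
  consider "j = 0" | "j = 1" | k where "j = Suc (Suc k)" by (cases j; cases "j - 1") auto
  then show ?case
  proof cases
    case 1
    then show ?thesis by auto
  next
    case 2
    have "l = -2 \<or> l = -1 \<or> l = 0 \<or> l = 1 \<or> l = 2 \<or> l < -2 \<or> l > 2" by arith
    then show ?thesis using 2 by (elim disjE) (auto simp: field_simps)
  next
    case 3
    define c :: complex where "c = (if odd k then 1 else 0)"
    have h1: "\<And>x. 2*\<i>*of_int x * fcoeff k x = of_nat k * fcoeff (k-1) x - c * (of_nat k+1) * fcoeff (Suc k) x"
      using less.IH[of k] 3 by (simp add: c_def)
    have h2: "\<And>x. (fcoeff k (x-1) - fcoeff k (x+1)) / (4*\<i>) = fcoeff (Suc k) x - c * sinsq (fcoeff (Suc k)) x"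
      using fcoeff_diff_shift[of k] by (simp add: c_def fcoeff_Suc_Suc[symmetric])
    have h3: "\<And>x. of_nat k * sinsq (fcoeff (k-1)) x = of_nat k * fcoeff (Suc k) x"
      by (cases k) (simp_all add: fcoeff_Suc_Suc[symmetric])
    have "2*\<i>*of_int l * fcoeff j l = 2*\<i>*of_int l * sinsq (fcoeff k) l" using 3 by (simp only: fcoeff_Suc_Suc)
    also have "\<dots> = (of_nat k+2) * fcoeff (Suc k) l - c * (of_nat k+3) * sinsq (fcoeff (Suc k)) l"
      by (rule sinsq_index_mult[OF h1 h2 h3])
    also have "\<dots> = of_nat j * fcoeff (j-1) l - (if odd j then of_nat (Suc j) * fcoeff (Suc j) l else 0)"
      using 3 by (simp add: c_def fcoeff_Suc_Suc algebra_simps del: fcoeff.simps)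
    finally show ?thesis .
  qed
qed

lemma fcoeff_eq_0: "int j + 1 < 2 * \<bar>l\<bar> \<Longrightarrow> fcoeff j l = 0"
proof (induction j arbitrary: l rule: less_induct)
  case (less j)
  consider "j = 0" | "j = 1" | k where "j = Suc (Suc k)" by (cases j; cases "j - 1") auto
  then show ?case
  proof cases
    case 1 then show ?thesis using less.prems by auto
  next
    case 2 then show ?thesis using less.prems by auto
  next
    case 3
    have a: "int k + 1 < 2*\<bar>l\<bar>" "int k + 1 < 2*\<bar>l-1\<bar>" "int k+1 < 2*\<bar>l+1\<bar>"
      using less.prems 3 by arith+
    have "fcoeff k l = 0" "fcoeff k (l-1) = 0" "fcoeff k (l+1) = 0"
      using less.IH[of k] a 3 by auto
    then show ?thesis using 3 by simp
  qed
qed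

lemma fcoeff_extreme:
  "fcoeff (2*M+1) (int M + 1) = (1/(4*\<i>)) * (-1/4)^M \<and> fcoeff (2*M+1) (-(int M + 1)) = -(1/(4*\<i>)) * (-1/4)^M"
proof (induction M)
  case 0
  then show ?case by simp
next
  case (Suc M)
  have z: "fcoeff (2*M+1) (int M + 2) = 0" "fcoeff (2*M+1) (int M + 3) = 0"
     "fcoeff (2*M+1) (-(int M + 2)) = 0" "fcoeff (2*M+1) (-(int M + 3)) = 0"
    by (rule fcoeff_eq_0, simp)+
  have e: "2 * Suc M + 1 = Suc (Suc (2*M+1))" by simp
  show ?case unfolding e fcoeff.simps(3)
    using Suc z by (simp add: algebra_simps)
qed


section \<open>The truncated generating function and its differential equation\<close>

definition lam :: "complex poly poly" where
  "lam = 32 * alpha + 2 * gamma"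

definition bsum :: "nat \<Rightarrow> int \<Rightarrow> complex poly poly" where
  "bsum m l = (\<Sum>j<m. cconst (fcoeff j l) * zhat (int j))"

text \<open>\<open>bsum m\<close> is the coefficient sequence of \<open>b(t) = \<Sum>j<m. zhat j f_j(t)\<close>, and \<open>Phi m\<close> that of
  \<open>256 b' - lam b + 2 gamma cos t b\<close>. By \<open>Phi_eq\<close> only the terms at the truncation survive,
  which lie in \<open>J m\<close> for even \<open>m\<close>.\<close>

definition Phi :: "nat \<Rightarrow> int \<Rightarrow> complex poly poly" where
  "Phi m l = cconst (256*\<i>*of_int l) * bsum m l - lam * bsum m l + gamma * (bsum m (l-1) + bsum m (l+1))"

lemma bsum_Suc: "bsum (Suc m) l = bsum m l + cconst (fcoeff m l) * zhat (int m)"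
  by (simp add: bsum_def)

lemma Phi_eq:
  "Phi m l = cconst (fcoeff (m-1) l) * (- 128 * of_nat m * zhat (int m))
     + cconst (fcoeff m l) * (- (if even m then 128 * of_nat m * zhat (int m - 1) else 0) - 4 * gamma * zhat (int m - 2))
     + cconst (fcoeff (Suc m) l) * (- 4 * gamma * zhat (int m - 1))"
  (is "_ = ?C m")
proof (induction m)
  case 0
  then show ?case by (simp add: Phi_def bsum_def zhat_def)
next
  case (Suc m)
  define Br where "Br = cconst (256*\<i>*of_int l) * cconst (fcoeff m l) - lam * cconst (fcoeff m l)
      + gamma * (cconst (fcoeff m (l-1)) + cconst (fcoeff m (l+1)))"
  have s1: "Phi (Suc m) l = Phi m l + zhat (int m) * Br"
    unfolding Phi_def bsum_Suc Br_def by (simp add: algebra_simps)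
  have fD: "cconst (256*\<i>*of_int l) * cconst (fcoeff m l) = 128 * of_nat m * cconst (fcoeff (m-1) l)
      - (if odd m then 128 * of_nat (Suc m) * cconst (fcoeff (Suc m) l) else 0)"
  proof -
    have "cconst (256*\<i>*of_int l) * cconst (fcoeff m l) = cconst (128 * (2*\<i>*of_int l * fcoeff m l))"
      by (simp add: cconst_mult[symmetric] algebra_simps)
    also have "\<dots> = cconst (128 * (of_nat m * fcoeff (m-1) l - (if odd m then of_nat (Suc m) * fcoeff (Suc m) l else 0)))"
      by (simp only: fcoeff_index_mult)
    finally show ?thesis
      by (cases "odd m") (simp_all add: cconst_mult cconst_diff cconst_numeral cconst_of_nat algebra_simps del: of_nat_Suc)
  qed
  have fT: "cconst (fcoeff m (l-1)) + cconst (fcoeff m (l+1)) = 2 * cconst (fcoeff m l) - 4 * cconst (fcoeff (Suc (Suc m)) l)"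
  proof -
    have "fcoeff m (l-1) + fcoeff m (l+1) = 2 * fcoeff m l - 4 * fcoeff (Suc (Suc m)) l" by (simp add: field_simps)
    then have "cconst (fcoeff m (l-1) + fcoeff m (l+1)) = cconst (2 * fcoeff m l - 4 * fcoeff (Suc (Suc m)) l)" by (rule arg_cong)
    then show ?thesis by (simp only: cconst_add cconst_diff cconst_mult cconst_numeral)
  qed
  have Br: "Br = 128 * of_nat m * cconst (fcoeff (m-1) l)
      - (if odd m then 128 * of_nat (Suc m) * cconst (fcoeff (Suc m) l) else 0)
      - 32 * alpha * cconst (fcoeff m l) - 4 * gamma * cconst (fcoeff (Suc (Suc m)) l)"
    unfolding Br_def fD lam_def by (simp only: fT) (simp add: algebra_simps)
  have yr: "32 * of_nat (m+1) * zhat (int m + 1) = 8 * alpha * zhat (int m)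
   + (if even m then 32 * of_nat m * zhat (int m - 1) else 0) + gamma * zhat (int m - 2)"
    by (rule zhat_rec)
  have i1: "int (Suc m) = int m + 1" "int (Suc m) - 1 = int m" "int (Suc m) - 2 = int m - 1" by auto
  have "Phi (Suc m) l - ?C (Suc m) = 4 * cconst (fcoeff m l) * (32 * of_nat (m+1) * zhat (int m + 1) - (8 * alpha * zhat (int m)
   + (if even m then 32 * of_nat m * zhat (int m - 1) else 0) + gamma * zhat (int m - 2)))"
    unfolding s1 Suc.IH Br i1 by (cases "even m") (simp_all add: algebra_simps)
  then show ?case using yr by simp
qed

lemma Phi_mem_J:
  assumes "even m"
  shows "Phi m l \<in> J (int m)"
proof -
  have y0: "zhat (int m) \<in> J (int m)" "zhat (int m + 1) \<in> J (int m)" "zhat (int m + 2) \<in> J (int m)"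
    using zhat_mem_J[of m m] zhat_mem_J[of m "Suc m"] zhat_mem_J[of m "Suc (Suc m)"] by (auto simp: add.commute)
  have r1: "32 * of_nat (m+1) * zhat (int m + 1) = 8 * alpha * zhat (int m)
   + 32 * of_nat m * zhat (int m - 1) + gamma * zhat (int m - 2)"
    using zhat_rec[of m] assms by simp
  have r2: "32 * of_nat (m+2) * zhat (int m + 2) = 8 * alpha * zhat (int m + 1) + gamma * zhat (int m - 1)"
    using zhat_rec[of "Suc m"] assms by (simp add: algebra_simps)
  have t2: "- 128 * of_nat m * zhat (int m - 1) - 4 * gamma * zhat (int m - 2)
      = 4 * (8 * alpha * zhat (int m) - 32 * of_nat (m+1) * zhat (int m + 1))"
    using r1 by (simp add: algebra_simps)
  have t3: "- 4 * gamma * zhat (int m - 1) = 4 * (8 * alpha * zhat (int m + 1) - 32 * of_nat (m+2) * zhat (int m + 2))"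
    using r2 by (simp add: algebra_simps)
  have "Phi m l = cconst (fcoeff (m-1) l) * (- 128 * of_nat m * zhat (int m))
     + cconst (fcoeff m l) * (4 * (8 * alpha * zhat (int m) - 32 * of_nat (m+1) * zhat (int m + 1)))
     + cconst (fcoeff (Suc m) l) * (4 * (8 * alpha * zhat (int m + 1) - 32 * of_nat (m+2) * zhat (int m + 2)))"
    unfolding Phi_eq using assms t2[symmetric] t3[symmetric] by simp
  also have "\<dots> \<in> J (int m)"
    using y0 by (intro J_add J_mult J_diff J_mult_right) auto
  finally show ?thesis .
qed


section \<open>The key membership \<open>alpha * zeta (2M - 1) \<in> J (2M)\<close>\<close>

lemma bsum_eq_0:
  assumes "int M < \<bar>l\<bar>"
  shows "bsum (2 * M) l = 0"
  unfolding bsum_def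
proof (rule sum.neutral, rule ballI)
  fix j assume "j \<in> {..<2 * M}"
  then have "int j + 1 < 2 * \<bar>l\<bar>" using assms by auto
  then show "cconst (fcoeff j l) * zhat (int j) = 0" by (simp add: fcoeff_eq_0)
qed

lemma bsum_extreme:
  assumes "\<bar>l\<bar> = int M" "M \<ge> 1"
  shows "bsum (2 * M) l = cconst (fcoeff (2 * M - 1) l) * zhat (int (2 * M - 1))"
proof -
  obtain n where n: "2 * M = Suc n" using assms(2) by (cases "2 * M") auto
  have "(\<Sum>j<n. cconst (fcoeff j l) * zhat (int j)) = 0"
  proof (rule sum.neutral, rule ballI)
    fix j assume "j \<in> {..<n}"
    then have "int j + 1 < 2 * \<bar>l\<bar>" using assms n by auto
    then show "cconst (fcoeff j l) * zhat (int j) = 0" by (simp add: fcoeff_eq_0)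
  qed
  then show ?thesis unfolding bsum_def n by simp
qed

lemma fcoeff_extreme_nonzero:
  assumes "\<bar>l\<bar> = int M" "M \<ge> 1"
  shows "fcoeff (2 * M - 1) l \<noteq> 0"
proof -
  obtain M' where M': "M = Suc M'" using assms(2) by (cases M) auto
  then have "2 * M - 1 = 2 * M' + 1" "l = int M' + 1 \<or> l = - (int M' + 1)" using assms(1) by auto
  then show ?thesis using fcoeff_extreme[of M'] by auto
qed

lemma Phi_sign:
  assumes "\<sigma> = 1 \<or> \<sigma> = -1"
  shows "Phi m (\<sigma> * l) = (cconst (256 * \<i> * of_int (\<sigma> * l)) - lam) * bsum m (\<sigma> * l)
           + gamma * (bsum m (\<sigma> * (l - 1)) + bsum m (\<sigma> * (l + 1)))"
proof -
  have neighbours: "bsum m (\<sigma> * l - 1) + bsum m (\<sigma> * l + 1) = bsum m (\<sigma> * (l - 1)) + bsum m (\<sigma> * (l + 1))"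
    using assms
  proof
    assume "\<sigma> = -1"
    then have "\<sigma> * l - 1 = \<sigma> * (l + 1)" "\<sigma> * l + 1 = \<sigma> * (l - 1)" by simp_all
    then show ?thesis by (simp only: add.commute)
  qed simp
  show ?thesis unfolding Phi_def by (subst neighbours[symmetric]) (simp add: algebra_simps)
qed

lemma Phi_double_mem_J: "Phi (2 * M) l \<in> J (int (2 * M))"
  by (rule Phi_mem_J) simp

lemma gamma_bsum_extreme_mem_J:
  assumes "\<sigma> = 1 \<or> \<sigma> = -1"
  shows "gamma * bsum (2 * M) (\<sigma> * int M) \<in> J (int (2 * M))"
proof -
  have "bsum (2 * M) (\<sigma> * (int M + 1)) = 0" "bsum (2 * M) (\<sigma> * (int M + 1 + 1)) = 0"
    using assms by (auto intro!: bsum_eq_0 simp: abs_mult)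
  then have "gamma * bsum (2 * M) (\<sigma> * int M) = Phi (2 * M) (\<sigma> * (int M + 1))"
    using Phi_sign[OF assms, of "2 * M" "int M + 1"] by simp
  then show ?thesis using Phi_double_mem_J by simp
qed

lemma bsum_chain_mem_J:
  assumes "\<sigma> = 1 \<or> \<sigma> = -1"
  shows "gamma ^ j * bsum (2 * M) (\<sigma> * (int M - int j))
    - (\<Prod>r<j. lam - cconst (256 * \<i> * of_int (\<sigma> * (int M - int r)))) * bsum (2 * M) (\<sigma> * int M)
    \<in> J (int (2 * M))"
proof -
  define B where "B j = bsum (2 * M) (\<sigma> * (int M - int j))" for j
  define s where "s r = 256 * \<i> * of_int (\<sigma> * (int M - int r))" for r
  have "gamma ^ j * B j - (\<Prod>r<j. lam - cconst (s r)) * B 0 \<in> J (int (2 * M))"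
  proof (rule J_three_term_chain)
    have "bsum (2 * M) (\<sigma> * (int M + 1)) = 0"
      using assms by (auto intro!: bsum_eq_0 simp: abs_mult)
    then have "(cconst (s 0) - lam) * B 0 + gamma * B 1 = Phi (2 * M) (\<sigma> * int M)"
      using Phi_sign[OF assms, of "2 * M" "int M"] by (simp add: B_def s_def)
    then show "(cconst (s 0) - lam) * B 0 + gamma * B 1 \<in> J (int (2 * M))"
      using Phi_double_mem_J by simp
  next
    fix j
    have "(cconst (s (Suc j)) - lam) * B (Suc j) + gamma * (B (Suc (Suc j)) + B j)
        = Phi (2 * M) (\<sigma> * (int M - int (Suc j)))"
      using Phi_sign[OF assms, of "2 * M" "int M - int (Suc j)"]
      by (simp add: B_def s_def algebra_simps)
    then show "(cconst (s (Suc j)) - lam) * B (Suc j) + gamma * (B (Suc (Suc j)) + B j) \<in> J (int (2 * M))"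
      using Phi_double_mem_J by simp
  next
    show "gamma * B 0 \<in> J (int (2 * M))"
      using gamma_bsum_extreme_mem_J[OF assms] by (simp add: B_def)
  qed
  then show ?thesis by (simp add: B_def s_def)
qed

text \<open>Running the chain from \<open>-\<sigma> M\<close> and from \<open>\<sigma> M\<close> to the common value \<open>bsum (2M) (-\<sigma>)\<close>
  and subtracting eliminates it.\<close>

lemma prod_bsum_extreme_mem_J:
  assumes \<sigma>: "\<sigma> = 1 \<or> \<sigma> = -1" and "M \<ge> 1"
  shows "(\<Prod>r<Suc M. lam - cconst (256 * \<i> * of_int (\<sigma> * (int M - int r)))) * bsum (2 * M) (\<sigma> * int M)
    \<in> J (int (2 * M))"
proof -
  define P where "P \<tau> j = (\<Prod>r<j. lam - cconst (256 * \<i> * of_int (\<tau> * (int M - int r))))" for \<tau> j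
  obtain M' where M': "M = Suc M'" using \<open>M \<ge> 1\<close> by (cases M) auto
  have \<tau>: "- \<sigma> = 1 \<or> - \<sigma> = -1" using \<sigma> by auto
  have near: "gamma ^ M' * bsum (2 * M) (- \<sigma>) - P (- \<sigma>) M' * bsum (2 * M) (- \<sigma> * int M) \<in> J (int (2 * M))"
    using bsum_chain_mem_J[OF \<tau>, of M' M] M' by (simp add: P_def)
  have far: "gamma ^ Suc M * bsum (2 * M) (- \<sigma>) - P \<sigma> (Suc M) * bsum (2 * M) (\<sigma> * int M) \<in> J (int (2 * M))"
    using bsum_chain_mem_J[OF \<sigma>, of "Suc M" M] by (simp add: P_def)
  have "P \<sigma> (Suc M) * bsum (2 * M) (\<sigma> * int M)
      = gamma\<^sup>2 * (gamma ^ M' * bsum (2 * M) (- \<sigma>) - P (- \<sigma>) M' * bsum (2 * M) (- \<sigma> * int M))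
        - (gamma ^ Suc M * bsum (2 * M) (- \<sigma>) - P \<sigma> (Suc M) * bsum (2 * M) (\<sigma> * int M))
        + gamma * P (- \<sigma>) M' * (gamma * bsum (2 * M) (- \<sigma> * int M))"
    using M' by (simp add: algebra_simps power2_eq_square)
  also have "\<dots> \<in> J (int (2 * M))"
    by (rule J_add[OF J_diff[OF J_mult[OF near] far] J_mult[OF gamma_bsum_extreme_mem_J[OF \<tau>]]])
  finally show ?thesis by (simp add: P_def)
qed

lemma alpha_zeta_odd_mem_J:
  assumes "M \<ge> 1"
  shows "alpha * zeta_nat (2 * M - 1) \<in> J (int (2 * M))"
proof -
  define z where "z = zhat (int (2 * M - 1))"
  define c where "c \<sigma> r = 256 * \<i> * of_int (\<sigma> * (int M - int r))" for \<sigma> :: int and r :: nat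
  have extreme: "bsum (2 * M) (\<sigma> * int M) = cconst (fcoeff (2 * M - 1) (\<sigma> * int M)) * z"
    "fcoeff (2 * M - 1) (\<sigma> * int M) \<noteq> 0" if "\<sigma> = 1 \<or> \<sigma> = -1" for \<sigma>
    using bsum_extreme[of "\<sigma> * int M" M] fcoeff_extreme_nonzero[of "\<sigma> * int M" M] that assms
    by (auto simp: z_def abs_mult)
  have lam_z: "(\<Prod>r\<in>{..<M}. lam - cconst (c \<sigma> r)) * (lam * z) \<in> J (int (2 * M))"
    if \<sigma>: "\<sigma> = 1 \<or> \<sigma> = -1" for \<sigma>
  proof (rule J_cancel_cconst[OF extreme(2)[OF \<sigma>]])
    show "cconst (fcoeff (2 * M - 1) (\<sigma> * int M)) * ((\<Prod>r\<in>{..<M}. lam - cconst (c \<sigma> r)) * (lam * z))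
      \<in> J (int (2 * M))"
      using prod_bsum_extreme_mem_J[OF \<sigma> assms] extreme(1)[OF \<sigma>] by (simp add: c_def algebra_simps)
  qed
  have "c 1 r \<noteq> c (-1) t" if "r < M" "t < M" for r t
  proof
    assume "c 1 r = c (-1) t"
    then have "1 * (int M - int r) = -1 * (int M - int t)"
      unfolding c_def by (simp only: mult_cancel_left of_int_eq_iff) simp
    with that show False by simp
  qed
  then have disjoint: "\<forall>r\<in>{..<M}. \<forall>t\<in>{..<M}. c 1 r \<noteq> c (-1) t"
    by blast
  have lam: "lam * z \<in> J (int (2 * M))"
    by (rule J_cancel_roots[OF _ _ disjoint]) (use lam_z[of 1] lam_z[of "-1"] in simp_all)
  have "cconst (fcoeff (2 * M - 1) (int M)) * (gamma * z) \<in> J (int (2 * M))"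
    using gamma_bsum_extreme_mem_J[of 1 M] extreme(1)[of 1] by (simp add: algebra_simps)
  then have gamma: "gamma * z \<in> J (int (2 * M))"
    by (rule J_cancel_cconst[rotated]) (use extreme(2)[of 1] in simp)
  have "cconst (32 * zhat_coeff (2 * M - 1)) * (alpha * zeta_nat (2 * M - 1)) = lam * z - 2 * (gamma * z)"
    by (simp add: z_def zhat_of_nat lam_def cconst_mult cconst_numeral algebra_simps)
  also have "\<dots> \<in> J (int (2 * M))"
    by (rule J_diff[OF lam J_mult[OF gamma]])
  finally show ?thesis
    by (rule J_cancel_cconst[rotated]) (simp add: zhat_coeff_nonzero)
qed


section \<open>Reduction modulo \<open>gamma\<close>\<close>

definition gconst :: "complex poly \<Rightarrow> complex poly poly" where
  "gconst p = [:p:]"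

lemma gconst_add: "gconst (a + b) = gconst a + gconst b"
  by (simp add: gconst_def)

lemma gconst_mult: "gconst (a * b) = gconst a * gconst b"
  by (simp add: gconst_def)

lemma gconst_diff: "gconst (a - b) = gconst a - gconst b"
  by (simp add: gconst_def)

lemma gconst_minus: "gconst (- a) = - gconst a"
  by (simp add: gconst_def)

lemma gconst_0 [simp]: "gconst 0 = 0"
  by (simp add: gconst_def)

lemma gconst_1 [simp]: "gconst 1 = 1"
  by (simp add: gconst_def one_pCons)

lemma gconst_X: "gconst [:0, 1:] = alpha"
  by (simp add: gconst_def alpha_def)

lemma gconst_of_nat: "gconst (of_nat n) = of_nat n"
  by (induction n) (simp_all add: gconst_add)

lemma gconst_power: "gconst (a ^ n) = gconst a ^ n"
  by (induction n) (simp_all add: gconst_mult)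

lemma gconst_coeff_0_plus_gamma: "\<exists>a1. a = gconst (coeff a 0) + gamma * a1"
proof -
  obtain c q where a: "a = pCons c q" by (cases a) auto
  have "a = gconst (coeff a 0) + gamma * q"
    unfolding a by (simp add: gconst_def gamma_def add_pCons[symmetric])
  then show ?thesis by blast
qed

lemma coeff_gamma_0: "coeff gamma 0 = 0"
  by (simp add: gamma_def)

lemma coeff_gamma_mult_0: "coeff (gamma * x) 0 = 0"
  by (simp add: coeff_mult_0 coeff_gamma_0)

lemma gamma_mult_cancel: "gamma * x = gamma * y \<longleftrightarrow> x = y"
  by (simp add: gamma_def)

lemma coeff_alpha_0: "coeff alpha 0 = [:0, 1:]"
  by (simp add: alpha_def)

lemma coeff_of_nat_0: "coeff (of_nat n :: complex poly poly) 0 = of_nat n"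
  by (induction n) (simp_all add: one_pCons)

definition zeta0 :: "nat \<Rightarrow> complex poly" where
  "zeta0 k = coeff (zeta_nat k) 0"

lemma zeta0_Suc: "zeta0 (Suc k) = [:0, 1:] * zeta0 k + (if even k then of_nat (16 * k^2) else 0) * zeta0 (k - 1)"
  unfolding zeta0_def zeta_nat_Suc[of k]
  by (cases "even k") (simp_all only: if_True if_False coeff_add coeff_mult_0 coeff_alpha_0 coeff_gamma_0
      coeff_of_nat_0 mult_zero_left mult_zero_right add_0_right coeff_0)

lemma zeta0_at_1: "\<exists>s::real. poly (zeta0 k) 1 = complex_of_real s \<and> s \<ge> 1"
proof (induction k rule: less_induct)
  case (less k)
  show ?case
  proof (cases k)
    case 0
    then show ?thesis by (simp add: zeta0_def)
  next
    case (Suc j)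
    obtain s where s: "poly (zeta0 j) 1 = complex_of_real s" "s \<ge> 1" using less.IH[of j] Suc by auto
    have "j - 1 < k" using Suc by simp
    then obtain s' where s': "poly (zeta0 (j - 1)) 1 = complex_of_real s'" "s' \<ge> 1"
      using less.IH by blast
    define c :: real where "c = (if even j then real (16 * j^2) else 0)"
    have "poly (zeta0 k) 1 = complex_of_real (s + c * s')"
      unfolding Suc zeta0_Suc using s s' by (simp add: c_def)
    moreover have "s + c * s' \<ge> 1" using s s' by (simp add: c_def add_increasing2)
    ultimately show ?thesis by blast
  qed
qed

lemma zeta0_nonzero: "zeta0 k \<noteq> 0"
  using zeta0_at_1[of k] by auto

lemma linear_relation_coprime:
  fixes a b e f u v :: "'a::idom"
  assumes bezout: "u * e + v * f = 1" and rel: "a * e + b * f = 0" and "f \<noteq> 0"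
  shows "\<exists>s. a = s * f \<and> b = - (s * e)"
proof -
  define s where "s = v * a - u * b"
  have a: "a = s * f"
  proof -
    have "a = a * (u * e + v * f)" using bezout by simp
    also have "\<dots> = u * (a * e + b * f) + s * f" by (simp add: s_def algebra_simps)
    finally show ?thesis using rel by simp
  qed
  have "(b + s * e) * f = 0" using rel unfolding a by (simp add: algebra_simps)
  then have "b = - (s * e)" using \<open>f \<noteq> 0\<close> by (simp add: eq_neg_iff_add_eq_0)
  with a show ?thesis by blast
qed

section \<open>Dividing by \<open>gamma\<close>\<close>

definition eta :: "nat \<Rightarrow> complex poly poly" where
  "eta r = of_nat (16 * (r + 5) * (r + 3)) * zeta_nat (r + 2) - alpha * zeta_nat (r + 3)"

definition Jeta :: "nat \<Rightarrow> complex poly poly set" where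
  "Jeta r = {A * eta r + B * zeta_nat (r + 4) + C * zeta_nat (r + 5) + D * zeta_nat (r + 6) + E * zeta_nat (r + 7)
    | A B C D E. True}"

context
  fixes r :: nat
  assumes r_odd: "odd r"
begin

lemma zeta_nat_add7: "zeta_nat (r+7) = alpha * zeta_nat (r+6) + of_nat (2*(r+6)*(r+5)) * gamma * zeta_nat (r+4)"
proof -
  have e: "r + 7 = Suc (r+6)" by simp
  show ?thesis unfolding e zeta_nat_Suc using r_odd by (simp add: ac_simps)
qed

lemma zeta_nat_add6:
  "zeta_nat (r+6) = alpha * zeta_nat (r+5) + of_nat (16*(r+5)^2) * zeta_nat (r+4) + of_nat (2*(r+5)*(r+4)) * gamma * zeta_nat (r+3)"
proof -
  have e: "r + 6 = Suc (r+5)" by simp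
  show ?thesis unfolding e zeta_nat_Suc using r_odd by (simp add: ac_simps)
qed

lemma zeta_nat_add5: "zeta_nat (r+5) = alpha * zeta_nat (r+4) + of_nat (2*(r+4)*(r+3)) * gamma * zeta_nat (r+2)"
proof -
  have e: "r + 5 = Suc (r+4)" by simp
  show ?thesis unfolding e zeta_nat_Suc using r_odd by (simp add: ac_simps)
qed

lemma zeta_nat_add4:
  "zeta_nat (r+4) = alpha * zeta_nat (r+3) + of_nat (16*(r+3)^2) * zeta_nat (r+2) + of_nat (2*(r+3)*(r+2)) * gamma * zeta_nat (r+1)"
proof -
  have e: "r + 4 = Suc (r+3)" by simp
  show ?thesis unfolding e zeta_nat_Suc using r_odd by (simp add: ac_simps)
qed

lemma zeta_nat_add3: "zeta_nat (r+3) = alpha * zeta_nat (r+2) + of_nat (2*(r+2)*(r+1)) * gamma * zeta_nat r"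
proof -
  have e: "r + 3 = Suc (r+2)" by simp
  show ?thesis unfolding e zeta_nat_Suc using r_odd by (simp add: ac_simps)
qed

lemma zeta0_add7: "zeta0 (r+7) = [:0,1:] * zeta0 (r+6)"
proof -
  have e: "r + 7 = Suc (r+6)" by simp
  show ?thesis unfolding e zeta0_Suc using r_odd by (simp add: ac_simps)
qed

lemma zeta0_add6: "zeta0 (r+6) = ([:0,1:]^2 + of_nat (16*(r+5)^2)) * zeta0 (r+4)"
proof -
  have e: "r + 6 = Suc (r+5)" "r + 5 = Suc (r+4)" by simp_all
  have "zeta0 (r+6) = [:0,1:] * zeta0 (r+5) + of_nat (16*(r+5)^2) * zeta0 (r+4)"
    unfolding e(1) zeta0_Suc using r_odd by (simp add: ac_simps)
  also have "zeta0 (r+5) = [:0,1:] * zeta0 (r+4)" unfolding e(2) zeta0_Suc using r_odd by (simp add: ac_simps)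
  finally show ?thesis by (simp only: algebra_simps power2_eq_square)
qed

lemma zeta0_add5: "zeta0 (r+5) = [:0,1:] * zeta0 (r+4)"
proof -
  have e: "r + 5 = Suc (r+4)" by simp
  show ?thesis unfolding e zeta0_Suc using r_odd by (simp add: ac_simps)
qed

lemma zeta0_add4: "zeta0 (r+4) = ([:0,1:]^2 + of_nat (16*(r+3)^2)) * zeta0 (r+2)"
proof -
  have e: "r + 4 = Suc (r+3)" "r + 3 = Suc (r+2)" by simp_all
  have "zeta0 (r+4) = [:0,1:] * zeta0 (r+3) + of_nat (16*(r+3)^2) * zeta0 (r+2)"
    unfolding e(1) zeta0_Suc using r_odd by (simp add: ac_simps)
  also have "zeta0 (r+3) = [:0,1:] * zeta0 (r+2)" unfolding e(2) zeta0_Suc using r_odd by (simp add: ac_simps)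
  finally show ?thesis by (simp only: algebra_simps power2_eq_square)
qed

lemma zeta0_add3: "zeta0 (r+3) = [:0,1:] * zeta0 (r+2)"
proof -
  have e: "r + 3 = Suc (r+2)" by simp
  show ?thesis unfolding e zeta0_Suc using r_odd by (simp add: ac_simps)
qed

lemma eta_identity:
  "(alpha^2 + of_nat (16 * (r + 5)^2)) * zeta_nat (r + 5) - alpha * zeta_nat (r + 6)
     = of_nat (2 * (r + 5) * (r + 4)) * gamma * eta r"
  unfolding eta_def zeta_nat_add6 zeta_nat_add5 by (simp add: algebra_simps power2_eq_square)

lemma constant_term_relation_J:
  assumes "coeff (a * zeta_nat (r + 5) + b * zeta_nat (r + 6) + c * zeta_nat (r + 7)) 0 = 0"
  shows "\<exists>s. coeff a 0 = s * ([:0, 1:]^2 + of_nat (16 * (r + 5)^2))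
    \<and> coeff b 0 = - ((s + coeff c 0) * [:0, 1:])"
proof -
  define X :: "complex poly" where "X = [:0, 1:]"
  define \<kappa> :: complex where "\<kappa> = of_nat (16 * (r + 5)^2)"
  define \<beta> where "\<beta> = X^2 + of_nat (16 * (r + 5)^2)"
  have \<beta>: "\<beta> = X^2 + [:\<kappa>:]" by (simp add: \<beta>_def \<kappa>_def of_nat_poly)
  have "\<kappa> \<noteq> 0" unfolding \<kappa>_def by (simp only: of_nat_eq_0_iff) simp
  have "(coeff a 0 * X + (coeff b 0 + coeff c 0 * X) * \<beta>) * zeta0 (r + 4) = 0"
    using assms zeta0_add5 zeta0_add6 zeta0_add7
    by (simp add: coeff_mult_0 zeta0_def X_def \<beta>_def algebra_simps)
  then have "coeff a 0 * X + (coeff b 0 + coeff c 0 * X) * \<beta> = 0"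
    using zeta0_nonzero by simp
  moreover have "(- [:1 / \<kappa>:] * X) * X + [:1 / \<kappa>:] * \<beta> = 1"
    using \<open>\<kappa> \<noteq> 0\<close> by (simp add: \<beta> algebra_simps power2_eq_square flip: mult_to_poly)
  moreover have "\<beta> \<noteq> 0"
    using \<open>\<kappa> \<noteq> 0\<close> by (auto simp: \<beta> X_def dest: arg_cong[of _ _ "\<lambda>p. poly p 0"])
  ultimately obtain s where a: "coeff a 0 = s * \<beta>" and bc: "coeff b 0 + coeff c 0 * X = - (s * X)"
    using linear_relation_coprime by blast
  have "coeff b 0 = (coeff b 0 + coeff c 0 * X) - coeff c 0 * X" by simp
  also have "\<dots> = - ((s + coeff c 0) * X)" by (simp only: bc) (simp add: algebra_simps)
  finally show ?thesis using a unfolding X_def \<beta>_def by blast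
qed

end

lemma gamma_mult_J_imp_Jeta:
  assumes r: "odd r" and w: "gamma * w \<in> J (int (r + 5))"
  shows "w \<in> Jeta r"
proof -
  obtain a b c where abc: "gamma * w = a * zeta_nat (r + 5) + b * zeta_nat (r + 6) + c * zeta_nat (r + 7)"
    using w unfolding J_of_nat_iff by (auto simp: ac_simps)
  obtain s where s: "coeff a 0 = s * ([:0, 1:]^2 + of_nat (16 * (r + 5)^2))"
    "coeff b 0 = - ((s + coeff c 0) * [:0, 1:])"
    using constant_term_relation_J[OF r, of a b c] abc coeff_gamma_mult_0[of w] by auto
  obtain a1 b1 c1 where a1: "a = gconst (coeff a 0) + gamma * a1" and b1: "b = gconst (coeff b 0) + gamma * b1"
    and c1: "c = gconst (coeff c 0) + gamma * c1"
    using gconst_coeff_0_plus_gamma by metis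
  define S where "S = gconst s"
  define C where "C = gconst (coeff c 0)"
  have z7: "zeta_nat (r + 7) - alpha * zeta_nat (r + 6) = of_nat (2 * (r + 6) * (r + 5)) * gamma * zeta_nat (r + 4)"
    using zeta_nat_add7[OF r] by simp
  have "gamma * w = (gconst (coeff a 0) + gamma * a1) * zeta_nat (r + 5)
      + (gconst (coeff b 0) + gamma * b1) * zeta_nat (r + 6) + (gconst (coeff c 0) + gamma * c1) * zeta_nat (r + 7)"
    by (simp only: a1[symmetric] b1[symmetric] c1[symmetric] abc)
  also have "\<dots> = S * ((alpha^2 + of_nat (16 * (r + 5)^2)) * zeta_nat (r + 5) - alpha * zeta_nat (r + 6))
      + C * (zeta_nat (r + 7) - alpha * zeta_nat (r + 6))
      + gamma * (a1 * zeta_nat (r + 5) + b1 * zeta_nat (r + 6) + c1 * zeta_nat (r + 7))"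
    unfolding s S_def C_def gconst_mult gconst_add gconst_minus gconst_power gconst_X gconst_of_nat
    by (simp add: algebra_simps)
  also have "\<dots> = gamma * (of_nat (2 * (r + 5) * (r + 4)) * S * eta r + of_nat (2 * (r + 6) * (r + 5)) * C * zeta_nat (r + 4)
      + a1 * zeta_nat (r + 5) + b1 * zeta_nat (r + 6) + c1 * zeta_nat (r + 7))"
    unfolding eta_identity[OF r] z7 by (simp add: algebra_simps)
  finally show ?thesis unfolding gamma_mult_cancel Jeta_def by blast
qed

lemma constant_term_relation_Jeta:
  assumes r: "odd r" and "coeff (A * eta r + B * zeta_nat (r + 4) + C * zeta_nat (r + 5) + D * zeta_nat (r + 6)
      + E * zeta_nat (r + 7)) 0 = 0"
  shows "\<exists>s. coeff A 0 = s * ([:0, 1:]^2 + of_nat (16 * (r + 3)^2))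
    \<and> coeff B 0 = - (s * (of_nat (16 * (r + 5) * (r + 3)) - [:0, 1:]^2)) - coeff C 0 * [:0, 1:]
        - (coeff D 0 + coeff E 0 * [:0, 1:]) * ([:0, 1:]^2 + of_nat (16 * (r + 5)^2))"
proof -
  define X :: "complex poly" where "X = [:0, 1:]"
  define \<kappa> :: complex where "\<kappa> = of_nat (16 * (r + 5) * (r + 3) + 16 * (r + 3)^2)"
  define e where "e = of_nat (16 * (r + 5) * (r + 3)) - X^2"
  define f where "f = X^2 + of_nat (16 * (r + 3)^2)"
  define \<beta> where "\<beta> = X^2 + of_nat (16 * (r + 5)^2)"
  define Y where "Y = coeff B 0 + coeff C 0 * X + (coeff D 0 + coeff E 0 * X) * \<beta>"
  have "\<kappa> \<noteq> 0" unfolding \<kappa>_def by (simp only: of_nat_eq_0_iff) simp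
  have ef: "e + f = [:\<kappa>:]" by (simp add: e_def f_def \<kappa>_def of_nat_poly)
  have "f \<noteq> 0"
  proof
    have "poly f 0 = of_nat (16 * (r + 3)^2)" by (simp add: f_def X_def)
    moreover assume "f = 0"
    ultimately have "(of_nat (16 * (r + 3)^2) :: complex) = 0" by simp
    then show False by (simp only: of_nat_eq_0_iff) simp
  qed
  have Z: "zeta0 (r + 4) = f * zeta0 (r + 2)" "zeta0 (r + 5) = X * f * zeta0 (r + 2)"
    "zeta0 (r + 6) = \<beta> * f * zeta0 (r + 2)" "zeta0 (r + 7) = X * \<beta> * f * zeta0 (r + 2)"
    using zeta0_add4[OF r] zeta0_add5[OF r] zeta0_add6[OF r] zeta0_add7[OF r]
    by (simp_all add: X_def f_def \<beta>_def mult.assoc)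
  have eta: "coeff (eta r) 0 = e * zeta0 (r + 2)"
  proof -
    have "coeff (eta r) 0 = of_nat (16 * (r + 5) * (r + 3)) * zeta0 (r + 2) - X * zeta0 (r + 3)"
      unfolding eta_def zeta0_def X_def by (simp only: coeff_diff coeff_mult_0 coeff_alpha_0 coeff_of_nat_0)
    then show ?thesis unfolding zeta0_add3[OF r] e_def X_def by (simp add: algebra_simps power2_eq_square)
  qed
  have "coeff A 0 * coeff (eta r) 0 + coeff B 0 * zeta0 (r + 4) + coeff C 0 * zeta0 (r + 5)
      + coeff D 0 * zeta0 (r + 6) + coeff E 0 * zeta0 (r + 7) = 0"
    using assms(2) by (simp add: coeff_mult_0 zeta0_def)
  then have "(coeff A 0 * e + Y * f) * zeta0 (r + 2) = 0"
    unfolding eta Z Y_def by (simp add: algebra_simps)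
  then have "coeff A 0 * e + Y * f = 0"
    using zeta0_nonzero by simp
  moreover have "[:1 / \<kappa>:] * e + [:1 / \<kappa>:] * f = 1"
    using \<open>\<kappa> \<noteq> 0\<close> by (simp only: distrib_left[symmetric] ef mult_to_poly) (simp add: one_pCons)
  ultimately obtain s where A: "coeff A 0 = s * f" and "Y = - (s * e)"
    using linear_relation_coprime \<open>f \<noteq> 0\<close> by blast
  then have "coeff B 0 = - (s * e) - coeff C 0 * X - (coeff D 0 + coeff E 0 * X) * \<beta>"
    by (simp add: Y_def algebra_simps)
  with A show ?thesis unfolding X_def e_def f_def \<beta>_def by blast
qed

definition gammaJ :: "int \<Rightarrow> complex poly poly set" where
  "gammaJ k = (\<lambda>x. gamma * x) ` J k"

lemma gamma_mult_mem_gammaJ_iff: "gamma * x \<in> gammaJ k \<longleftrightarrow> x \<in> J k"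
  by (auto simp: gammaJ_def gamma_def)

lemma gammaJ_add: "x \<in> gammaJ k \<Longrightarrow> y \<in> gammaJ k \<Longrightarrow> x + y \<in> gammaJ k"
  by (auto simp: gammaJ_def distrib_left[symmetric] intro: J_add)

lemma gammaJ_mult: "x \<in> gammaJ k \<Longrightarrow> c * x \<in> gammaJ k"
  by (auto simp: gammaJ_def mult.left_commute[of c] intro: J_mult)

lemma Jeta_subset_J: "Jeta r \<subseteq> J (int (r + 1))"
proof
  have z: "zeta_nat (r + i) \<in> J (int (r + 1))" if "i \<ge> 1" for i
    using that by (intro zeta_nat_mem_J) simp
  have "eta r \<in> J (int (r + 1))"
    unfolding eta_def using z[of 2] z[of 3] by (intro J_diff J_mult) simp_all
  then show "x \<in> J (int (r + 1))" if "x \<in> Jeta r" for x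
    using that z[of 4] z[of 5] z[of 6] z[of 7] unfolding Jeta_def by (auto intro!: J_add J_mult)
qed

context
  fixes r :: nat
  assumes r: "odd r"
begin

lemma zeta_nat_add5_mod_gamma: "zeta_nat (r + 5) - alpha * zeta_nat (r + 4) \<in> gammaJ (int (r + 1))"
proof -
  have eq: "zeta_nat (r + 5) - alpha * zeta_nat (r + 4) = gamma * (of_nat (2 * (r + 4) * (r + 3)) * zeta_nat (r + 2))"
    unfolding zeta_nat_add5[OF r] by (simp add: algebra_simps)
  show ?thesis unfolding eq gamma_mult_mem_gammaJ_iff by (intro J_mult zeta_nat_mem_J) simp
qed

lemma zeta_nat_add6_mod_gamma:
  "zeta_nat (r + 6) - (alpha^2 + of_nat (16 * (r + 5)^2)) * zeta_nat (r + 4) \<in> gammaJ (int (r + 1))"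
proof -
  have eq: "zeta_nat (r + 6) - (alpha^2 + of_nat (16 * (r + 5)^2)) * zeta_nat (r + 4)
    = gamma * (of_nat (2 * (r + 4) * (r + 3)) * alpha * zeta_nat (r + 2) + of_nat (2 * (r + 5) * (r + 4)) * zeta_nat (r + 3))"
    unfolding zeta_nat_add6[OF r] zeta_nat_add5[OF r] by (simp add: algebra_simps power2_eq_square)
  show ?thesis unfolding eq gamma_mult_mem_gammaJ_iff by (intro J_add J_mult zeta_nat_mem_J) simp_all
qed

lemma zeta_nat_add7_mod_gamma:
  "zeta_nat (r + 7) - alpha * (alpha^2 + of_nat (16 * (r + 5)^2)) * zeta_nat (r + 4) \<in> gammaJ (int (r + 1))"
proof -
  have eq: "zeta_nat (r + 7) - alpha * (alpha^2 + of_nat (16 * (r + 5)^2)) * zeta_nat (r + 4)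
    = of_nat (2 * (r + 6) * (r + 5)) * (gamma * zeta_nat (r + 4))
      + alpha * (zeta_nat (r + 6) - (alpha^2 + of_nat (16 * (r + 5)^2)) * zeta_nat (r + 4))"
    unfolding zeta_nat_add7[OF r] by (simp add: algebra_simps)
  have "gamma * zeta_nat (r + 4) \<in> gammaJ (int (r + 1))"
    unfolding gamma_mult_mem_gammaJ_iff by (rule zeta_nat_mem_J) simp
  then show ?thesis unfolding eq by (rule gammaJ_add[OF gammaJ_mult gammaJ_mult[OF zeta_nat_add6_mod_gamma]])
qed

lemma eta_mod_gamma:
  "(alpha^2 + of_nat (16 * (r + 3)^2)) * eta r - (of_nat (16 * (r + 5) * (r + 3)) - alpha^2) * zeta_nat (r + 4)
    \<in> gammaJ (int (r + 1))"
proof -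
  obtain k where k: "r = 2 * k + 1" using r by (rule oddE)
  have "alpha * zeta_nat r \<in> J (int (r + 1))"
    using alpha_zeta_odd_mem_J[of "Suc k"] k by simp
  moreover have "zeta_nat (r + 1) \<in> J (int (r + 1))" by (rule zeta_nat_mem_J) simp
  ultimately have "(- of_nat ((16 * (r + 3)^2 + 16 * (r + 5) * (r + 3)) * (2 * (r + 2) * (r + 1)))) * (alpha * zeta_nat r)
      + (alpha^2 - of_nat (16 * (r + 5) * (r + 3))) * of_nat (2 * (r + 3) * (r + 2)) * zeta_nat (r + 1)
    \<in> J (int (r + 1))"
    by (intro J_add[OF J_mult J_mult])
  moreover have "(alpha^2 + of_nat (16 * (r + 3)^2)) * eta r - (of_nat (16 * (r + 5) * (r + 3)) - alpha^2) * zeta_nat (r + 4)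
      = gamma * ((- of_nat ((16 * (r + 3)^2 + 16 * (r + 5) * (r + 3)) * (2 * (r + 2) * (r + 1)))) * (alpha * zeta_nat r)
          + (alpha^2 - of_nat (16 * (r + 5) * (r + 3))) * of_nat (2 * (r + 3) * (r + 2)) * zeta_nat (r + 1))"
    unfolding eta_def zeta_nat_add4[OF r] zeta_nat_add3[OF r] by (simp add: algebra_simps power2_eq_square)
  ultimately show ?thesis by (simp only: gamma_mult_mem_gammaJ_iff)
qed

end


lemma gamma_mult_Jeta_decompose:
  assumes r: "odd r" and u: "gamma * u \<in> Jeta r"
  shows "\<exists>S C D E v. v \<in> Jeta r \<and> gamma * u =
      S * ((alpha^2 + of_nat (16 * (r + 3)^2)) * eta r - (of_nat (16 * (r + 5) * (r + 3)) - alpha^2) * zeta_nat (r + 4))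
      + C * (zeta_nat (r + 5) - alpha * zeta_nat (r + 4))
      + D * (zeta_nat (r + 6) - (alpha^2 + of_nat (16 * (r + 5)^2)) * zeta_nat (r + 4))
      + E * (zeta_nat (r + 7) - alpha * (alpha^2 + of_nat (16 * (r + 5)^2)) * zeta_nat (r + 4))
      + gamma * v"
proof -
  obtain A B C D E where eq: "gamma * u = A * eta r + B * zeta_nat (r + 4) + C * zeta_nat (r + 5)
      + D * zeta_nat (r + 6) + E * zeta_nat (r + 7)"
    using u unfolding Jeta_def by blast
  obtain s where sA: "coeff A 0 = s * ([:0, 1:]^2 + of_nat (16 * (r + 3)^2))"
    and sB: "coeff B 0 = - (s * (of_nat (16 * (r + 5) * (r + 3)) - [:0, 1:]^2)) - coeff C 0 * [:0, 1:]
        - (coeff D 0 + coeff E 0 * [:0, 1:]) * ([:0, 1:]^2 + of_nat (16 * (r + 5)^2))"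
    using constant_term_relation_Jeta[OF r, of A B C D E] eq coeff_gamma_mult_0[of u] by auto
  obtain A1 B1 C1 D1 E1 where A1: "A = gconst (coeff A 0) + gamma * A1"
    and B1: "B = gconst (coeff B 0) + gamma * B1" and C1: "C = gconst (coeff C 0) + gamma * C1"
    and D1: "D = gconst (coeff D 0) + gamma * D1" and E1: "E = gconst (coeff E 0) + gamma * E1"
    using gconst_coeff_0_plus_gamma by metis
  have "gamma * u = (gconst (coeff A 0) + gamma * A1) * eta r + (gconst (coeff B 0) + gamma * B1) * zeta_nat (r + 4)
      + (gconst (coeff C 0) + gamma * C1) * zeta_nat (r + 5) + (gconst (coeff D 0) + gamma * D1) * zeta_nat (r + 6)
      + (gconst (coeff E 0) + gamma * E1) * zeta_nat (r + 7)"
    by (simp only: A1[symmetric] B1[symmetric] C1[symmetric] D1[symmetric] E1[symmetric] eq)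
  also have "\<dots> = gconst s * ((alpha^2 + of_nat (16 * (r + 3)^2)) * eta r
        - (of_nat (16 * (r + 5) * (r + 3)) - alpha^2) * zeta_nat (r + 4))
      + gconst (coeff C 0) * (zeta_nat (r + 5) - alpha * zeta_nat (r + 4))
      + gconst (coeff D 0) * (zeta_nat (r + 6) - (alpha^2 + of_nat (16 * (r + 5)^2)) * zeta_nat (r + 4))
      + gconst (coeff E 0) * (zeta_nat (r + 7) - alpha * (alpha^2 + of_nat (16 * (r + 5)^2)) * zeta_nat (r + 4))
      + gamma * (A1 * eta r + B1 * zeta_nat (r + 4) + C1 * zeta_nat (r + 5) + D1 * zeta_nat (r + 6)
        + E1 * zeta_nat (r + 7))"
    unfolding sA sB gconst_mult gconst_add gconst_diff gconst_minus gconst_power gconst_X gconst_of_nat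
    by (simp add: algebra_simps)
  finally show ?thesis unfolding Jeta_def by blast
qed

lemma gamma_mult_Jeta_imp_J:
  assumes r: "odd r" and u: "gamma * u \<in> Jeta r"
  shows "u \<in> J (int (r + 1))"
proof -
  obtain S C D E v where v: "v \<in> Jeta r" and eq: "gamma * u =
      S * ((alpha^2 + of_nat (16 * (r + 3)^2)) * eta r - (of_nat (16 * (r + 5) * (r + 3)) - alpha^2) * zeta_nat (r + 4))
      + C * (zeta_nat (r + 5) - alpha * zeta_nat (r + 4))
      + D * (zeta_nat (r + 6) - (alpha^2 + of_nat (16 * (r + 5)^2)) * zeta_nat (r + 4))
      + E * (zeta_nat (r + 7) - alpha * (alpha^2 + of_nat (16 * (r + 5)^2)) * zeta_nat (r + 4))
      + gamma * v"
    using gamma_mult_Jeta_decompose[OF r u] by blast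
  have "gamma * v \<in> gammaJ (int (r + 1))"
    using v Jeta_subset_J by (auto simp: gamma_mult_mem_gammaJ_iff)
  then have "gamma * u \<in> gammaJ (int (r + 1))"
    unfolding eq by (intro gammaJ_add gammaJ_mult[OF eta_mod_gamma[OF r]] gammaJ_mult[OF zeta_nat_add5_mod_gamma[OF r]]
        gammaJ_mult[OF zeta_nat_add6_mod_gamma[OF r]] gammaJ_mult[OF zeta_nat_add7_mod_gamma[OF r]])
  then show ?thesis by (simp add: gamma_mult_mem_gammaJ_iff)
qed

theorem lemma5p10:
  fixes g :: int and u :: "complex poly poly"
  assumes "even g" and "g \<ge> 2" and "gamma ^ 2 * u \<in> J g"
  shows "u \<in> J (g - 4)"
proof (cases "g \<le> 4")
  case True
  then show ?thesis using assms(2) J_eq_UNIV[of "g - 4"] by simp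
next
  case False
  define r where "r = nat g - 5"
  have g: "g = int (r + 5)" using False by (simp add: r_def)
  then have r: "odd r" using assms(1) by simp
  have "gamma * (gamma * u) \<in> J (int (r + 5))"
    using assms(3) g by (simp add: power2_eq_square mult.assoc)
  then have "gamma * u \<in> Jeta r" by (rule gamma_mult_J_imp_Jeta[OF r])
  then have "u \<in> J (int (r + 1))" by (rule gamma_mult_Jeta_imp_J[OF r])
  then show ?thesis using g by simp
qed

end
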